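(* Let $R$ be the ring of upper triangular $2\times 2$ matrices over the field $\mathbb{F}_2$ (a non-commutative ring with unity of order $8$ having exactly $6$ zero-divisors, counting $0$). Consider the (left) projective line $P(R)$. Then: (i) $P(R)$ has exactly $18$ points; (ii) exactly $14$ of these points have a representative pair $(a,b)$ in which $a$ or $b$ is a unit of $R$; (iii) every point of $P(R)$ has exactly $9$ neighbours other than itself; (iv) any two distant points of $P(R)$ have exactly $4$ common neighbours; (v) any three pairwise distant points of $P(R)$ have no common neighbour; (vi) the maximum cardinality of a set of pairwise distant points of $P(R)$ is $3$. *)

theory Defs
  imports Main "HOL-Library.Z2"
begin

text \<open>The ring R of upper triangular 2x2 matrices over the field F_2 (type bit).
  An element (a, b, c) represents the matrix [[a, b], [0, c]].\<close>

type_synonym ut = "bit \<times> bit \<times> bit"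

definition ut_zero :: ut where "ut_zero = (0, 0, 0)"
definition ut_one :: ut where "ut_one = (1, 0, 1)"

fun ut_add :: "ut \<Rightarrow> ut \<Rightarrow> ut" where
  "ut_add (a, b, c) (a', b', c') = (a + a', b + b', c + c')"

fun ut_mul :: "ut \<Rightarrow> ut \<Rightarrow> ut" where
  "ut_mul (a, b, c) (a', b', c') = (a * a', a * b' + b * c', c * c')"

definition ut_unit :: "ut \<Rightarrow> bool" where
  "ut_unit x \<longleftrightarrow> (\<exists>y. ut_mul x y = ut_one \<and> ut_mul y x = ut_one)"

text \<open>2x2 matrices over R, written row-wise as (a, b, c, d) = [[a, b], [c, d]].\<close>

type_synonym mat2 = "ut \<times> ut \<times> ut \<times> ut"

fun mat2_mul :: "mat2 \<Rightarrow> mat2 \<Rightarrow> mat2" where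
  "mat2_mul (a, b, c, d) (e, f, g, h) =
     (ut_add (ut_mul a e) (ut_mul b g), ut_add (ut_mul a f) (ut_mul b h),
      ut_add (ut_mul c e) (ut_mul d g), ut_add (ut_mul c f) (ut_mul d h))"

definition mat2_one :: mat2 where "mat2_one = (ut_one, ut_zero, ut_zero, ut_one)"

definition GL2 :: "mat2 \<Rightarrow> bool" where
  "GL2 M \<longleftrightarrow> (\<exists>N. mat2_mul M N = mat2_one \<and> mat2_mul N M = mat2_one)"

definition admissible :: "ut \<times> ut \<Rightarrow> bool" where
  "admissible p \<longleftrightarrow> (\<exists>c d. GL2 (fst p, snd p, c, d))"

definition cyc :: "ut \<times> ut \<Rightarrow> (ut \<times> ut) set" where
  "cyc p = {(ut_mul r (fst p), ut_mul r (snd p)) | r. True}"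

definition PR :: "(ut \<times> ut) set set" where
  "PR = {cyc p | p. admissible p}"

text \<open>Distant points: R(a,b) and R(c,d) with [[a,b],[c,d]] in GL_2(R).
  Points are neighbours iff they are not distant.\<close>
definition distant :: "(ut \<times> ut) set \<Rightarrow> (ut \<times> ut) set \<Rightarrow> bool" where
  "distant P Q \<longleftrightarrow> (\<exists>a b c d. P = cyc (a, b) \<and> Q = cyc (c, d) \<and> GL2 (a, b, c, d))"

end

theory Submission
  imports Defs
begin

text \<open>
  Reduction modulo the radical J = {(0, b, 0)} maps R onto F_2 x F_2 (the two diagonal
  entries), so a pair over R has two reductions in F_2^2. A matrix over R is invertible iff
  both of its reductions are, hence a pair is admissible iff both reductions are non-zero,
  and two points are distant iff their reductions differ in both components. The only units
  of R are 1 and [[1, 1], [0, 1]], so every point has exactly two admissible representatives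
  and P(R) covers P(F_2) x P(F_2) two-to-one. In this 3 x 3 grid, distant means lying in
  another row and another column: all counts are twice counts in the grid (18 = 2 * 9,
  14 = 2 * 7, 9 = 2 * 5 - 1, 4 = 2 * 2), a point cannot share a row or column with each of
  three points in pairwise different rows and columns, and a pairwise distant set has at
  most one point per row.
\<close>

fun red1 :: "ut \<times> ut \<Rightarrow> bit \<times> bit" where
  "red1 ((a, _, _), (b, _, _)) = (a, b)"

fun red2 :: "ut \<times> ut \<Rightarrow> bit \<times> bit" where
  "red2 ((_, _, a), (_, _, b)) = (a, b)"

text \<open>In characteristic 2 the determinant needs no sign.\<close>

fun det2 :: "bit \<times> bit \<Rightarrow> bit \<times> bit \<Rightarrow> bit" where
  "det2 (a, b) (c, d) = a * d + b * c"

lemma GL2_iff_det2: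
  "GL2 (a, b, c, d) \<longleftrightarrow>
     det2 (red1 (a, b)) (red1 (c, d)) = 1 \<and> det2 (red2 (a, b)) (red2 (c, d)) = 1"
proof -
  obtain a1 a2 a3 b1 b2 b3 c1 c2 c3 d1 d2 d3 where M:
    "a = (a1, a2, a3)" "b = (b1, b2, b3)" "c = (c1, c2, c3)" "d = (d1, d2, d3)"
    by (metis prod.exhaust)
  show ?thesis
  proof
    assume "GL2 (a, b, c, d)"
    then obtain e1 e2 e3 f1 f2 f3 g1 g2 g3 h1 h2 h3 where
      "mat2_mul (a, b, c, d) ((e1, e2, e3), (f1, f2, f3), (g1, g2, g3), (h1, h2, h3)) = mat2_one"
      unfolding GL2_def by (metis prod.exhaust)
    then have "a1 * e1 + b1 * g1 = 1" "a1 * f1 + b1 * h1 = 0"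
      "c1 * e1 + d1 * g1 = 0" "c1 * f1 + d1 * h1 = 1"
      "a3 * e3 + b3 * g3 = 1" "a3 * f3 + b3 * h3 = 0"
      "c3 * e3 + d3 * g3 = 0" "c3 * f3 + d3 * h3 = 1"
      by (simp_all add: M mat2_one_def ut_one_def ut_zero_def)
    then show "det2 (red1 (a, b)) (red1 (c, d)) = 1 \<and> det2 (red2 (a, b)) (red2 (c, d)) = 1"
      unfolding M by (cases a1; cases b1; cases c1; cases d1; simp;
          cases a3; cases b3; cases c3; cases d3; simp)
  next
    assume det: "det2 (red1 (a, b)) (red1 (c, d)) = 1 \<and> det2 (red2 (a, b)) (red2 (c, d)) = 1"
    \<comment> \<open>Write M = D + K with D diagonal and K over the radical; then K D' K = 0 and 2 = 0,
      so D' M D' inverts M when D' inverts D.\<close>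
    define D' :: mat2 where "D' = ((d1, 0, d3), (b1, 0, b3), (c1, 0, c3), (a1, 0, a3))"
    let ?M = "(a, b, c, d)"
    have "mat2_mul ?M (mat2_mul D' (mat2_mul ?M D')) = mat2_one \<and>
          mat2_mul (mat2_mul D' (mat2_mul ?M D')) ?M = mat2_one"
      using det unfolding M D'_def mat2_one_def ut_one_def ut_zero_def
      by (cases a1; cases b1; cases c1; cases d1; simp;
          cases a3; cases b3; cases c3; cases d3; simp; simp only: bit_not_one_iff[symmetric]; argo)
    then show "GL2 ?M" unfolding GL2_def by blast
  qed
qed

lemma admissible_iff: "admissible p \<longleftrightarrow> red1 p \<noteq> (0, 0) \<and> red2 p \<noteq> (0, 0)"
proof -
  obtain a1 a2 a3 b1 b2 b3 where p: "p = ((a1, a2, a3), (b1, b2, b3))"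
    by (metis prod.exhaust)
  have ex_bit: "(\<exists>x::bit. P x) \<longleftrightarrow> P 0 \<or> P 1" for P
    by (metis bit.exhaust)
  show ?thesis
    unfolding p admissible_def by (simp add: GL2_iff_det2 split_paired_Ex ex_bit;
        cases a1; cases b1; cases a3; cases b3; simp)
qed

lemma det2_eq_1_iff_neq: "u \<noteq> (0, 0) \<Longrightarrow> v \<noteq> (0, 0) \<Longrightarrow> det2 u v = 1 \<longleftrightarrow> u \<noteq> v"
  by (cases u; cases v) (auto elim: bit.exhaust)

lemma ut_mul_assoc: "ut_mul r (ut_mul s a) = ut_mul (ut_mul r s) a"
  by (cases r; cases s; cases a) (simp del: add_bit_eq_xor mult_bit_eq_and add: algebra_simps)

lemma ut_unit_iff: "ut_unit (a, b, c) \<longleftrightarrow> a = 1 \<and> c = 1"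
proof
  assume "ut_unit (a, b, c)"
  then obtain y1 y2 y3 where "ut_mul (a, b, c) (y1, y2, y3) = ut_one"
    unfolding ut_unit_def by (metis prod.exhaust)
  then have "a * y1 = 1" "c * y3 = 1"
    by (simp_all add: ut_one_def)
  then show "a = 1 \<and> c = 1"
    by (metis mult_zero_left zero_neq_one bit_not_zero_iff)
next
  assume "a = 1 \<and> c = 1"
  then have "ut_mul (a, b, c) (a, b, c) = ut_one"
    by (simp add: ut_one_def)
  then show "ut_unit (a, b, c)"
    unfolding ut_unit_def by blast
qed

definition ut_unipotent :: ut where "ut_unipotent = (1, 1, 1)"

lemma ut_unit_cases: "ut_unit u \<longleftrightarrow> u = ut_one \<or> u = ut_unipotent"
  by (cases u) (auto simp: ut_unit_iff ut_one_def ut_unipotent_def elim: bit.exhaust)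

lemma ut_unit_right_factor: "ut_unit (ut_mul s r) \<Longrightarrow> ut_unit r"
  by (cases s; cases r) (auto simp: ut_unit_iff elim: bit.exhaust)

definition pair_smult :: "ut \<Rightarrow> ut \<times> ut \<Rightarrow> ut \<times> ut" where
  "pair_smult r p = (ut_mul r (fst p), ut_mul r (snd p))"

lemma cyc_eq_range: "cyc p = range (\<lambda>r. pair_smult r p)"
  unfolding cyc_def pair_smult_def by auto

lemma pair_smult_smult: "pair_smult r (pair_smult s p) = pair_smult (ut_mul r s) p"
  unfolding pair_smult_def by (simp add: ut_mul_assoc)

lemma pair_smult_one [simp]: "pair_smult ut_one p = p"
  unfolding pair_smult_def ut_one_def by (cases p) auto

lemma in_cyc_self: "p \<in> cyc p"
  unfolding cyc_eq_range by (metis pair_smult_one rangeI)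

lemma cyc_smult_unit:
  assumes "ut_unit u"
  shows "cyc (pair_smult u p) = cyc p"
proof -
  obtain v where v: "ut_mul v u = ut_one"
    using assms unfolding ut_unit_def by blast
  have "range (\<lambda>r. pair_smult (ut_mul r u) p) = range (\<lambda>r. pair_smult r p)"
  proof (intro equalityI image_subsetI)
    fix r
    have "pair_smult r p = pair_smult (ut_mul (ut_mul r v) u) p"
      by (metis pair_smult_one pair_smult_smult v)
    then show "pair_smult r p \<in> range (\<lambda>r. pair_smult (ut_mul r u) p)"
      by blast
  qed auto
  then show ?thesis
    unfolding cyc_eq_range pair_smult_smult .
qed

lemma pair_smult_fixed_imp_unit:
  assumes "admissible p" "pair_smult t p = p"
  shows "ut_unit t"
proof -
  obtain a1 a2 a3 b1 b2 b3 where p: "p = ((a1, a2, a3), (b1, b2, b3))"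
    by (metis prod.exhaust)
  obtain t1 t2 t3 where t: "t = (t1, t2, t3)"
    by (metis prod.exhaust)
  have "t1 * a1 = a1" "t1 * b1 = b1" "t3 * a3 = a3" "t3 * b3 = b3"
    using assms(2) unfolding p t pair_smult_def by simp_all
  moreover have "(a1, b1) \<noteq> (0, 0)" "(a3, b3) \<noteq> (0, 0)"
    using assms(1) unfolding admissible_iff p by auto
  ultimately show ?thesis
    unfolding t ut_unit_iff by (cases t1; cases t3) auto
qed

lemma cyc_eq_imp_unit_multiple:
  assumes "admissible p" "cyc q = cyc p"
  obtains u where "ut_unit u" "q = pair_smult u p"
proof -
  obtain r where r: "q = pair_smult r p"
    using in_cyc_self[of q] assms(2) unfolding cyc_eq_range by blast
  obtain s where s: "p = pair_smult s q"
    using in_cyc_self[of p] assms(2) unfolding cyc_eq_range by blast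
  have "pair_smult (ut_mul s r) p = p"
    by (simp only: pair_smult_smult[symmetric] r[symmetric] s[symmetric])
  then have "ut_unit r"
    using pair_smult_fixed_imp_unit[OF assms(1)] ut_unit_right_factor by blast
  with r that show thesis by blast
qed

lemma red_smult_unit:
  assumes "ut_unit u"
  shows "red1 (pair_smult u p) = red1 p" "red2 (pair_smult u p) = red2 p"
  using assms by (cases u; cases p; auto simp: ut_unit_iff pair_smult_def)+

lemma red_eq_if_cyc_eq:
  assumes "admissible p" "cyc q = cyc p"
  shows "red1 q = red1 p" "red2 q = red2 p"
  using cyc_eq_imp_unit_multiple[OF assms] red_smult_unit by metis+

lemma cyc_eq_iff:
  assumes "admissible p"
  shows "cyc q = cyc p \<longleftrightarrow> q = p \<or> q = pair_smult ut_unipotent p"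
proof
  assume "cyc q = cyc p"
  with assms obtain u where "ut_unit u" "q = pair_smult u p"
    by (rule cyc_eq_imp_unit_multiple)
  then show "q = p \<or> q = pair_smult ut_unipotent p"
    by (auto simp: ut_unit_cases)
next
  assume "q = p \<or> q = pair_smult ut_unipotent p"
  then show "cyc q = cyc p"
    using cyc_smult_unit[of ut_unipotent p] by (auto simp: ut_unit_cases)
qed

definition red_distant :: "ut \<times> ut \<Rightarrow> ut \<times> ut \<Rightarrow> bool" where
  "red_distant p q \<longleftrightarrow> red1 p \<noteq> red1 q \<and> red2 p \<noteq> red2 q"

lemma distant_cyc_iff:
  assumes "admissible p" "admissible q"
  shows "distant (cyc p) (cyc q) \<longleftrightarrow> red_distant p q"
proof
  assume "distant (cyc p) (cyc q)"
  then obtain a b c d where abcd: "cyc p = cyc (a, b)" "cyc q = cyc (c, d)" "GL2 (a, b, c, d)"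
    unfolding distant_def by blast
  have "red1 (a, b) = red1 p" "red2 (a, b) = red2 p" "red1 (c, d) = red1 q" "red2 (c, d) = red2 q"
    using red_eq_if_cyc_eq assms abcd(1,2) by metis+
  then show "red_distant p q"
    using abcd(3) assms unfolding GL2_iff_det2 red_distant_def admissible_iff
    by (simp add: det2_eq_1_iff_neq)
next
  assume "red_distant p q"
  then have "GL2 (fst p, snd p, fst q, snd q)"
    using assms unfolding GL2_iff_det2 red_distant_def admissible_iff
    by (simp add: det2_eq_1_iff_neq)
  then show "distant (cyc p) (cyc q)"
    unfolding distant_def by (metis prod.collapse)
qed

lemma ex_unit_rep_iff:
  assumes "admissible p"
  shows "(\<exists>a b. cyc p = cyc (a, b) \<and> (ut_unit a \<or> ut_unit b)) \<longleftrightarrow>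
    ut_unit (fst p) \<or> ut_unit (snd p)"
proof -
  have unit_red: "ut_unit (fst q) \<or> ut_unit (snd q) \<longleftrightarrow>
      (fst (red1 q) = 1 \<and> fst (red2 q) = 1) \<or> (snd (red1 q) = 1 \<and> snd (red2 q) = 1)" for q
    by (cases q) (auto simp: ut_unit_iff)
  show ?thesis
  proof
    assume "\<exists>a b. cyc p = cyc (a, b) \<and> (ut_unit a \<or> ut_unit b)"
    then obtain a b where ab: "cyc (a, b) = cyc p" "ut_unit a \<or> ut_unit b"
      by metis
    then show "ut_unit (fst p) \<or> ut_unit (snd p)"
      using unit_red[of "(a, b)"] unit_red[of p] red_eq_if_cyc_eq[OF assms ab(1)] by simp
  next
    assume "ut_unit (fst p) \<or> ut_unit (snd p)"
    then show "\<exists>a b. cyc p = cyc (a, b) \<and> (ut_unit a \<or> ut_unit b)"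
      by (metis prod.collapse)
  qed
qed

lemma red_distant_triple_no_common_neighbour:
  assumes "red_distant p q" "red_distant p s" "red_distant q s"
    and "\<not> red_distant n p" "\<not> red_distant n q"
  shows "red_distant n s"
  using assms unfolding red_distant_def by metis

text \<open>Multiplying p by ut_unipotent adds a3 to a2 and b3 to b2; of the two representatives
  of each point, the list keeps the one with a2 = 0 if a3 = 1, and with b2 = 0 otherwise.\<close>

definition reps :: "(ut \<times> ut) list" where
  "reps =
    [((0,0,0),(1,0,1)), ((0,1,0),(1,0,1)), ((0,0,1),(1,0,0)), ((0,0,1),(1,1,0)),
     ((0,0,1),(1,0,1)), ((0,1,1),(1,0,1)), ((1,0,0),(0,0,1)), ((1,1,0),(0,0,1)),
     ((1,0,1),(0,0,0)), ((1,0,1),(0,1,0)), ((1,0,1),(0,0,1)), ((1,1,1),(0,0,1)),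
     ((1,0,0),(1,0,1)), ((1,1,0),(1,0,1)), ((1,0,1),(1,0,0)), ((1,0,1),(1,1,0)),
     ((1,0,1),(1,0,1)), ((1,1,1),(1,0,1))]"

lemma reps_admissible: "p \<in> set reps \<Longrightarrow> admissible p"
  unfolding reps_def by (auto simp: admissible_iff)

lemma admissible_imp_reps:
  assumes "admissible p"
  shows "p \<in> set reps \<or> pair_smult ut_unipotent p \<in> set reps"
proof -
  obtain a1 a2 a3 b1 b2 b3 where p: "p = ((a1, a2, a3), (b1, b2, b3))"
    by (metis prod.exhaust)
  show ?thesis
    using assms unfolding p admissible_iff
    by (cases a1; cases a2; cases a3; cases b1; cases b2; cases b3)
       (simp_all add: reps_def pair_smult_def ut_unipotent_def)
qed

lemma PR_eq_image_reps: "PR = cyc ` set reps"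
proof -
  have "cyc p \<in> cyc ` set reps" if "admissible p" for p
    using admissible_imp_reps[OF that] cyc_eq_iff[OF that] cyc_eq_iff by blast
  then show ?thesis
    unfolding PR_def using reps_admissible by blast
qed

lemma inj_on_cyc_reps: "inj_on cyc (set reps)"
proof (rule inj_onI)
  fix p q
  assume "p \<in> set reps" "q \<in> set reps" "cyc p = cyc q"
  moreover have "\<forall>p\<in>set reps. \<forall>q\<in>set reps. p \<noteq> pair_smult ut_unipotent q"
    unfolding reps_def pair_smult_def ut_unipotent_def by simp
  ultimately show "p = q"
    using cyc_eq_iff reps_admissible by blast
qed

lemma card_PR_filter: "card {P \<in> PR. F P} = length (filter (\<lambda>p. F (cyc p)) reps)"
proof -
  have "{P \<in> PR. F P} = cyc ` set (filter (\<lambda>p. F (cyc p)) reps)"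
    unfolding PR_eq_image_reps by auto
  moreover have "inj_on cyc (set (filter (\<lambda>p. F (cyc p)) reps))"
    using inj_on_cyc_reps by (rule inj_on_subset) auto
  ultimately have "card {P \<in> PR. F P} = card (set (filter (\<lambda>p. F (cyc p)) reps))"
    by (simp only: card_image)
  also have "\<dots> = length (filter (\<lambda>p. F (cyc p)) reps)"
    by (rule distinct_card, rule distinct_filter) (simp add: reps_def)
  finally show ?thesis .
qed

lemma distant_reps_iff:
  "p \<in> set reps \<Longrightarrow> q \<in> set reps \<Longrightarrow> distant (cyc p) (cyc q) \<longleftrightarrow> red_distant p q"
  by (simp add: distant_cyc_iff reps_admissible)

lemma card_PR: "card PR = 18"
  using card_PR_filter[of "\<lambda>_. True"] by (simp add: reps_def)

lemma card_PR_unit_rep: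
  "card {P \<in> PR. \<exists>a b. P = cyc (a, b) \<and> (ut_unit a \<or> ut_unit b)} = 14"
proof -
  have "filter (\<lambda>p. \<exists>a b. cyc p = cyc (a, b) \<and> (ut_unit a \<or> ut_unit b)) reps
      = filter (\<lambda>p. ut_unit (fst p) \<or> ut_unit (snd p)) reps"
    by (rule filter_cong) (metis ex_unit_rep_iff reps_admissible)+
  then show ?thesis
    unfolding card_PR_filter by (simp add: reps_def ut_unit_iff)
qed

lemma card_neighbours:
  assumes "P \<in> PR"
  shows "card {Q \<in> PR. Q \<noteq> P \<and> \<not> distant P Q} = 9"
proof -
  obtain p where p: "p \<in> set reps" "P = cyc p"
    using assms unfolding PR_eq_image_reps by blast
  have "card {Q \<in> PR. Q \<noteq> P \<and> \<not> distant P Q}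
      = length (filter (\<lambda>q. q \<noteq> p \<and> \<not> red_distant p q) reps)"
    unfolding card_PR_filter p(2) using p(1) inj_on_cyc_reps
    by (intro arg_cong[where f = length] filter_cong) (auto simp: distant_reps_iff inj_on_eq_iff)
  also have "\<dots> = 9"
  proof -
    have "\<forall>p\<in>set reps. length (filter (\<lambda>q. q \<noteq> p \<and> \<not> red_distant p q) reps) = 9"
      unfolding reps_def red_distant_def by simp
    then show ?thesis
      using p(1) by blast
  qed
  finally show ?thesis .
qed

lemma card_common_neighbours:
  assumes "P \<in> PR" "Q \<in> PR" "distant P Q"
  shows "card {N \<in> PR. \<not> distant N P \<and> \<not> distant N Q} = 4"
proof -
  obtain p q where pq: "p \<in> set reps" "q \<in> set reps" "P = cyc p" "Q = cyc q"
    using assms(1,2) unfolding PR_eq_image_reps by blast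
  have "card {N \<in> PR. \<not> distant N P \<and> \<not> distant N Q}
      = length (filter (\<lambda>n. \<not> red_distant n p \<and> \<not> red_distant n q) reps)"
    unfolding card_PR_filter pq(3,4) using pq(1,2)
    by (intro arg_cong[where f = length] filter_cong) (auto simp: distant_reps_iff)
  also have "\<dots> = 4"
  proof -
    have "\<forall>p\<in>set reps. \<forall>q\<in>set reps. red_distant p q \<longrightarrow>
        length (filter (\<lambda>n. \<not> red_distant n p \<and> \<not> red_distant n q) reps) = 4"
      unfolding reps_def red_distant_def by simp
    moreover have "red_distant p q"
      using assms(3) pq by (simp add: distant_reps_iff)
    ultimately show ?thesis
      using pq(1,2) by blast
  qed
  finally show ?thesis .
qed

lemma no_common_neighbour_of_distant_triple:
  assumes "P \<in> PR" "Q \<in> PR" "S \<in> PR" "distant P Q" "distant P S" "distant Q S"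
  shows "{N \<in> PR. \<not> distant N P \<and> \<not> distant N Q \<and> \<not> distant N S} = {}"
proof -
  obtain p q s where pqs: "p \<in> set reps" "q \<in> set reps" "s \<in> set reps"
    and PQS: "P = cyc p" "Q = cyc q" "S = cyc s"
    using assms(1-3) unfolding PR_eq_image_reps by blast
  have "red_distant p q" "red_distant p s" "red_distant q s"
    using assms(4-6) pqs unfolding PQS by (simp_all add: distant_reps_iff)
  have "distant N P \<or> distant N Q \<or> distant N S" if N: "N \<in> PR" for N
  proof -
    obtain n where "n \<in> set reps" "N = cyc n"
      using N unfolding PR_eq_image_reps by blast
    then show ?thesis
      using red_distant_triple_no_common_neighbour[OF \<open>red_distant p q\<close>
          \<open>red_distant p s\<close> \<open>red_distant q s\<close>, of n] pqs
      unfolding PQS by (auto simp: distant_reps_iff)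
  qed
  then show ?thesis
    by blast
qed

lemma card_pairwise_distant_le_3:
  assumes "T \<subseteq> PR" "pairwise distant T"
  shows "card T \<le> 3"
proof -
  define T' where "T' = {p \<in> set reps. cyc p \<in> T}"
  have T: "T = cyc ` T'"
    using assms(1) unfolding T'_def PR_eq_image_reps by auto
  have inj: "inj_on red1 T'"
  proof (rule inj_onI)
    fix p q
    assume pq: "p \<in> T'" "q \<in> T'" "red1 p = red1 q"
    show "p = q"
    proof (rule ccontr)
      assume "p \<noteq> q"
      then have "cyc p \<noteq> cyc q"
        using pq(1,2) inj_on_cyc_reps unfolding T'_def by (auto dest: inj_onD)
      then have "distant (cyc p) (cyc q)"
        using assms(2) pq(1,2) unfolding T'_def pairwise_def by blast
      then have "red_distant p q"
        using pq(1,2) unfolding T'_def by (simp add: distant_reps_iff)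
      with pq(3) show False
        unfolding red_distant_def by simp
    qed
  qed
  have red1_T': "red1 ` T' \<subseteq> {(0, 1), (1, 0), (1, 1)}"
  proof
    fix u
    assume "u \<in> red1 ` T'"
    then obtain p where "p \<in> set reps" "u = red1 p"
      unfolding T'_def by blast
    then have "u \<noteq> (0, 0)"
      using reps_admissible admissible_iff by metis
    then show "u \<in> {(0, 1), (1, 0), (1, 1)}"
      by (cases u) (auto elim: bit.exhaust)
  qed
  have "card T = card T'"
    unfolding T by (rule card_image, rule inj_on_subset[OF inj_on_cyc_reps]) (auto simp: T'_def)
  also have "\<dots> = card (red1 ` T')"
    using inj by (rule card_image[symmetric])
  also have "\<dots> \<le> card {(0::bit, 1::bit), (1, 0), (1, 1)}"
    using red1_T' by (rule card_mono[rotated]) simp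
  also have "\<dots> = 3"
    by simp
  finally show ?thesis .
qed

lemma ex_pairwise_distant_3: "\<exists>T \<subseteq> PR. pairwise distant T \<and> card T = 3"
proof -
  define ps :: "(ut \<times> ut) set" where
    "ps = {((0, 0, 0), (1, 0, 1)), ((1, 0, 1), (0, 0, 0)), ((1, 0, 1), (1, 0, 1))}"
  have ps: "ps \<subseteq> set reps"
    unfolding ps_def reps_def by simp
  have pairwise_red: "pairwise red_distant ps"
    unfolding ps_def pairwise_def red_distant_def by simp
  have "pairwise distant (cyc ` ps)"
  proof (intro pairwiseI)
    fix P Q
    assume "P \<in> cyc ` ps" "Q \<in> cyc ` ps" "P \<noteq> Q"
    then obtain p q where "p \<in> ps" "q \<in> ps" "p \<noteq> q" "P = cyc p" "Q = cyc q"
      by blast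
    moreover from this have "p \<in> set reps" "q \<in> set reps"
      using ps by auto
    ultimately show "distant P Q"
      using pairwise_red unfolding pairwise_def by (simp add: distant_reps_iff)
  qed
  moreover have "card (cyc ` ps) = 3"
    using inj_on_subset[OF inj_on_cyc_reps ps] by (simp add: card_image ps_def)
  moreover have "cyc ` ps \<subseteq> PR"
    using ps unfolding PR_eq_image_reps by auto
  ultimately show ?thesis
    by blast
qed

lemma max_card_pairwise_distant: "Max {card T | T. T \<subseteq> PR \<and> pairwise distant T} = 3"
proof (rule Max_eqI)
  show "finite {card T | T. T \<subseteq> PR \<and> pairwise distant T}"
    by (rule finite_subset[of _ "{..3}"]) (auto simp: card_pairwise_distant_le_3)
qed (use card_pairwise_distant_le_3 ex_pairwise_distant_3 in auto)

theorem mainTheorem3: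
  shows "card PR = 18
    \<and> card {P \<in> PR. \<exists>a b. P = cyc (a, b) \<and> (ut_unit a \<or> ut_unit b)} = 14
    \<and> (\<forall>P\<in>PR. card {Q \<in> PR. Q \<noteq> P \<and> \<not> distant P Q} = 9)
    \<and> (\<forall>P\<in>PR. \<forall>Q\<in>PR. distant P Q \<longrightarrow>
           card {N \<in> PR. \<not> distant N P \<and> \<not> distant N Q} = 4)
    \<and> (\<forall>P\<in>PR. \<forall>Q\<in>PR. \<forall>S\<in>PR. distant P Q \<and> distant P S \<and> distant Q S \<longrightarrow>
           {N \<in> PR. \<not> distant N P \<and> \<not> distant N Q \<and> \<not> distant N S} = {})
    \<and> Max {card T | T. T \<subseteq> PR \<and> pairwise distant T} = 3"
  using card_PR card_PR_unit_rep card_neighbours card_common_neighbours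
    no_common_neighbour_of_distant_triple max_card_pairwise_distant
  by blast

end
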